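(* Let $\mu$ be a Borel probability measure on $\mathbb{R}$ with $m_1(\mu)=0$, $m_2(\mu)=1$ and $m_4(\mu)<\infty$. Then $$L(\mu,\mathbf{b})\le \frac72\sqrt[3]{m_4(\mu)-1}.$$
   Context: $m_k(\mu)=\int x^k\,d\mu(x)$. $\mathbf{b}=\frac12\delta_{-1}+\frac12\delta_1$. The Lévy distance between probability measures with distribution functions $F,G$ is $L=\inf\{\epsilon>0: F(x-\epsilon)-\epsilon\le G(x)\le F(x+\epsilon)+\epsilon\ \forall x\in\mathbb{R}\}$. *)

theory Defs
  imports "HOL-Probability.Probability"
begin

definition cdf_of :: "real measure \<Rightarrow> real \<Rightarrow> real" where
  "cdf_of M x = measure M {..x}"

definition levy_dist :: "real measure \<Rightarrow> real measure \<Rightarrow> real" where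
  "levy_dist M N = Inf {\<epsilon>. \<epsilon> > 0 \<and> (\<forall>x. cdf_of M (x - \<epsilon>) - \<epsilon> \<le> cdf_of N x
                                   \<and> cdf_of N x \<le> cdf_of M (x + \<epsilon>) + \<epsilon>)}"

definition bern_sym :: "real measure" where
  "bern_sym = measure_pmf (pmf_of_set {-1, 1})"

definition moment :: "real measure \<Rightarrow> nat \<Rightarrow> real" where
  "moment M k = (\<integral>x. x ^ k \<partial>M)"

end

theory Submission
  imports Defs
begin

text \<open>
  Write \<open>\<delta> = m\<^sub>4 - 1\<close>, the integral of \<open>(x\<^sup>2 - 1)\<^sup>2\<close>. For \<open>0 < \<epsilon> \<le> 1\<close> the indicators
  of \<open>(-\<infinity>, \<plusminus>1 \<plusminus> \<epsilon>]\<close> are squeezed between polynomials \<open>\<alpha> + \<beta> x + K (x\<^sup>2 - 1)\<^sup>2\<close> with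
  \<open>K = 1/(4\<epsilon>) + 1/\<epsilon>\<^sup>2\<close>, whose integrals are \<open>\<alpha> + K \<delta>\<close> because the mean vanishes.
  This pins the distribution function of \<open>\<mu>\<close> near \<open>\<plusminus>1\<close> to within \<open>\<epsilon>/4 + K \<delta>\<close> of the
  step function of \<open>\<^bold>b\<close>, and \<open>K \<delta> \<le> 3\<epsilon>/4\<close> as soon as \<open>\<epsilon> > 7/2 \<delta>\<^bsup>1/3\<^esup>\<close>.
\<close>

lemma cdf_of_eq_cdf: "cdf_of = cdf"
  by (simp add: fun_eq_iff cdf_of_def cdf_def)

lemma cdf_bern_sym:
  "cdf_of bern_sym x = (if x < -1 then 0 else if x < 1 then 1/2 else 1)"
proof -
  have "cdf_of bern_sym x = card ({-1, 1::real} \<inter> {..x}) / card {-1, 1::real}"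
    unfolding cdf_of_def bern_sym_def by (rule measure_pmf_of_set) auto
  moreover have "{-1, 1::real} \<inter> {..x} = (if x < -1 then {} else if x < 1 then {-1} else {-1, 1})"
    by auto
  ultimately show ?thesis
    by auto
qed

definition levy_within :: "real measure \<Rightarrow> real measure \<Rightarrow> real \<Rightarrow> bool" where
  "levy_within M N \<epsilon> \<longleftrightarrow>
     (\<forall>x. cdf_of M (x - \<epsilon>) - \<epsilon> \<le> cdf_of N x \<and> cdf_of N x \<le> cdf_of M (x + \<epsilon>) + \<epsilon>)"

lemma levy_dist_le:
  assumes "0 \<le> c" and "\<And>\<epsilon>. c < \<epsilon> \<Longrightarrow> levy_within M N \<epsilon>"
  shows "levy_dist M N \<le> c"
proof -
  have "Inf {\<epsilon>. 0 < \<epsilon> \<and> levy_within M N \<epsilon>} \<le> Inf {c<..}"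
    using assms by (intro cInf_superset_mono) (auto intro: bdd_belowI[of _ 0])
  then show ?thesis
    by (simp add: levy_dist_def levy_within_def)
qed

lemma levy_within_of_ge_1:
  assumes "prob_space M" "prob_space N" "1 \<le> \<epsilon>"
  shows "levy_within M N \<epsilon>"
  using assms prob_space.prob_le_1[of M] prob_space.prob_le_1[of N]
  by (smt (verit) cdf_of_def levy_within_def measure_nonneg)

lemma half_abs_le_arith_mean:
  fixes e y :: real
  assumes "0 < e"
  shows "\<bar>y\<bar> / 2 \<le> e / 4 + y\<^sup>2 / (4 * e)"
proof -
  have "2 * e * \<bar>y\<bar> \<le> e\<^sup>2 + y\<^sup>2"
    using sum_squares_ge_zero[of "\<bar>y\<bar> - e" 0] by (simp add: power2_eq_square algebra_simps)
  then show ?thesis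
    using assms by (simp add: field_simps power2_eq_square)
qed

lemma quartic_weight_ge_1:
  fixes e x :: real
  assumes "0 < e" and "1 + e \<le> \<bar>x\<bar>"
  shows "1 \<le> (1 / (4 * e) + 1 / e\<^sup>2) * (x\<^sup>2 - 1)\<^sup>2"
proof -
  have "(1 + e)\<^sup>2 \<le> x\<^sup>2"
    using assms power_mono[of "1 + e" "\<bar>x\<bar>" 2] by simp
  moreover have "(1 + e)\<^sup>2 = 1 + 2 * e + e\<^sup>2"
    by (simp add: power2_sum)
  ultimately have "2 * e \<le> x\<^sup>2 - 1"
    using zero_le_power2[of e] by linarith
  then have "e\<^sup>2 \<le> (x\<^sup>2 - 1)\<^sup>2"
    using assms power_mono[of e "x\<^sup>2 - 1" 2] by simp
  then have "1 \<le> (x\<^sup>2 - 1)\<^sup>2 / e\<^sup>2"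
    using assms by simp
  moreover have "0 \<le> (x\<^sup>2 - 1)\<^sup>2 / (4 * e)"
    using assms by simp
  ultimately show ?thesis
    by (simp add: distrib_right)
qed

lemma indicator_le_minus_one_minus:
  fixes e x :: real
  assumes "0 < e"
  shows "indicator {..-1-e} x \<le> (1 / (4 * e) + 1 / e\<^sup>2) * (x\<^sup>2 - 1)\<^sup>2"
proof (cases "x \<le> -1-e")
  case True
  then have "1 + e \<le> \<bar>x\<bar>"
    by linarith
  with True show ?thesis
    using quartic_weight_ge_1[OF assms] by simp
next
  case False
  then show ?thesis
    using assms by simp
qed

lemma indicator_one_plus_ge:
  fixes e x :: real
  assumes "0 < e"
  shows "1 - (1 / (4 * e) + 1 / e\<^sup>2) * (x\<^sup>2 - 1)\<^sup>2 \<le> indicator {..1+e} x"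
proof (cases "x \<le> 1+e")
  case True
  then show ?thesis
    using assms by simp
next
  case False
  then have "1 + e \<le> \<bar>x\<bar>"
    by linarith
  with False show ?thesis
    using quartic_weight_ge_1[OF assms] by simp
qed

lemma indicator_le_one_minus:
  fixes e x :: real
  assumes e: "0 < e" "e \<le> 1"
  shows "indicator {..1-e} x \<le> (1 - x) / 2 + e / 4 + (1 / (4 * e) + 1 / e\<^sup>2) * (x\<^sup>2 - 1)\<^sup>2"
proof -
  define q where "q = (x\<^sup>2 - 1)\<^sup>2"
  have amgm: "\<bar>x\<^sup>2 - 1\<bar> / 2 \<le> e / 4 + q / (4 * e)"
    unfolding q_def using e(1) by (rule half_abs_le_arith_mean)
  have split: "(1 / (4 * e) + 1 / e\<^sup>2) * q = q / (4 * e) + q / e\<^sup>2"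
    by (simp add: algebra_simps)
  have "0 \<le> q / (4 * e)" "0 \<le> q / e\<^sup>2"
    using e unfolding q_def by simp_all
  consider "x \<le> 0" | "0 < x" "x \<le> 1 - e" | "1 - e < x"
    by linarith
  then have "indicator {..1-e} x \<le> (1 - x) / 2 + e / 4 + q / (4 * e) + q / e\<^sup>2"
  proof cases
    case 1
    have "x + 1 \<le> \<bar>x + 1\<bar> * \<bar>x - 1\<bar>"
      using 1 by (smt (verit) mult_le_cancel_left1 abs_ge_zero)
    also have "\<dots> = \<bar>x\<^sup>2 - 1\<bar>"
      by (simp add: abs_mult[symmetric] power2_eq_square algebra_simps)
    finally have "x + 1 \<le> \<bar>x\<^sup>2 - 1\<bar>" .
    moreover have "indicator {..1-e} x = (1::real)"
      using 1 e by simp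
    ultimately show ?thesis
      using amgm \<open>0 \<le> q / e\<^sup>2\<close> by argo
  next
    case 2
    then have "x\<^sup>2 \<le> x"
      using e by (simp add: power2_eq_square mult_left_le_one_le)
    with 2 have "e\<^sup>2 \<le> (1 - x\<^sup>2)\<^sup>2"
      using e power_mono[of e "1 - x\<^sup>2" 2] by simp
    then have "1 \<le> q / e\<^sup>2"
      using e unfolding q_def by (simp add: power2_commute)
    moreover have "indicator {..1-e} x = (1::real)"
      using 2 by simp
    ultimately show ?thesis
      using 2 e \<open>0 \<le> q / (4 * e)\<close> by argo
  next
    case 3
    have "x - 1 \<le> \<bar>x - 1\<bar> * \<bar>x + 1\<bar>"
      using 3 e by (smt (verit) mult_le_cancel_left1 abs_ge_zero)
    also have "\<dots> = \<bar>x\<^sup>2 - 1\<bar>"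
      by (simp add: abs_mult[symmetric] power2_eq_square algebra_simps)
    finally have "x - 1 \<le> \<bar>x\<^sup>2 - 1\<bar>" .
    moreover have "indicator {..1-e} x = (0::real)"
      using 3 by simp
    ultimately show ?thesis
      using amgm \<open>0 \<le> q / e\<^sup>2\<close> by argo
  qed
  then show ?thesis
    unfolding split[unfolded q_def] q_def by linarith
qed

lemma indicator_minus_one_plus_ge:
  fixes e x :: real
  assumes "0 < e" "e \<le> 1"
  shows "(1 - x) / 2 - e / 4 - (1 / (4 * e) + 1 / e\<^sup>2) * (x\<^sup>2 - 1)\<^sup>2 \<le> indicator {..-1+e} x"
proof -
  have "indicator {..1-e} (-x) \<le> (1 + x) / 2 + e / 4 + (1 / (4 * e) + 1 / e\<^sup>2) * (x\<^sup>2 - 1)\<^sup>2"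
    using indicator_le_one_minus[OF assms, of "-x"] by simp
  moreover have "1 \<le> indicator {..-1+e} x + (indicator {..1-e} (-x) :: real)"
    by (auto simp: indicator_def)
  ultimately show ?thesis
    by argo
qed

lemma abs_power_le_one_plus_abs_power:
  fixes x :: real
  assumes "k \<le> n"
  shows "\<bar>x\<bar> ^ k \<le> 1 + \<bar>x\<bar> ^ n"
proof (cases "\<bar>x\<bar> \<le> 1")
  case True
  then show ?thesis
    by (smt (verit) power_le_one zero_le_power abs_ge_zero)
next
  case False
  then have "\<bar>x\<bar> ^ k \<le> \<bar>x\<bar> ^ n"
    by (intro power_increasing[OF assms]) simp
  then show ?thesis
    by simp
qed

lemma levy_weight_bound:
  fixes e \<delta> :: real
  assumes e: "0 < e" "e \<le> 1" and \<delta>: "0 \<le> \<delta>" and "7 / 2 * root 3 \<delta> < e"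
  shows "(1 / (4 * e) + 1 / e\<^sup>2) * \<delta> \<le> 3 / 4 * e"
proof -
  have "343 / 8 * \<delta> = (7 / 2 * root 3 \<delta>) ^ 3"
    using \<delta> by (simp only: power_mult_distrib real_root_pow_pos2) (simp add: power3_eq_cube)
  also have "\<dots> < e ^ 3"
    using assms by (intro power_strict_mono) (auto simp: real_root_ge_zero)
  moreover have "0 \<le> e ^ 3"
    using e by simp
  ultimately have "\<delta> \<le> 3 / 5 * e ^ 3"
    by linarith
  have "e\<^sup>2 \<le> e"
    using e by (simp add: power2_eq_square mult_left_le_one_le)
  then have "1 / (4 * e) \<le> 1 / (4 * e\<^sup>2)"
    by (rule divide_left_mono[of "4 * e\<^sup>2" "4 * e" 1, simplified]) (use e in auto)
  moreover have "1 / (4 * e\<^sup>2) + 1 / e\<^sup>2 = 5 / (4 * e\<^sup>2)"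
    using e by (simp add: field_simps)
  ultimately have "1 / (4 * e) + 1 / e\<^sup>2 \<le> 5 / (4 * e\<^sup>2)"
    by linarith
  then have "(1 / (4 * e) + 1 / e\<^sup>2) * \<delta> \<le> 5 / (4 * e\<^sup>2) * (3 / 5 * e ^ 3)"
    using \<delta> \<open>\<delta> \<le> 3 / 5 * e ^ 3\<close> e
    by (intro mult_mono) auto
  also have "\<dots> = 3 / 4 * e"
    using e by (simp add: field_simps power2_eq_square power3_eq_cube)
  finally show ?thesis .
qed

locale standardized_distribution = real_distribution M for M :: "real measure" +
  assumes integrable_power_4: "integrable M (\<lambda>x. x ^ 4)"
    and moment_1: "moment M 1 = 0"
    and moment_2: "moment M 2 = 1"
begin

lemma integrable_power:
  assumes "k \<le> 4"
  shows "integrable M (\<lambda>x. x ^ k)"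
proof (rule Bochner_Integration.integrable_bound)
  show "integrable M (\<lambda>x. 1 + x ^ 4)"
    using integrable_power_4 by simp
  show "AE x in M. norm (x ^ k) \<le> norm (1 + x ^ 4)"
    using abs_power_le_one_plus_abs_power[OF assms]
    by (simp add: power_abs power_even_abs_numeral zero_le_even_power)
qed measurable

lemma
  fixes \<alpha> \<beta> \<gamma> :: real
  shows integrable_quartic: "integrable M (\<lambda>x. \<alpha> + \<beta> * x + \<gamma> * (x\<^sup>2 - 1)\<^sup>2)"
    and integral_quartic: "(\<integral>x. \<alpha> + \<beta> * x + \<gamma> * (x\<^sup>2 - 1)\<^sup>2 \<partial>M) = \<alpha> + \<gamma> * (moment M 4 - 1)"
proof -
  have expand: "(\<lambda>x. \<alpha> + \<beta> * x + \<gamma> * (x\<^sup>2 - 1)\<^sup>2) =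
      (\<lambda>x. (\<alpha> + \<gamma>) + \<beta> * x ^ 1 + (- 2 * \<gamma>) * x ^ 2 + \<gamma> * x ^ 4)"
    by (simp add: fun_eq_iff power2_eq_square power4_eq_xxxx algebra_simps)
  note ints = integrable_power[of 1] integrable_power[of 2] integrable_power_4
  have "prob UNIV = 1"
    using prob_space by simp
  show "integrable M (\<lambda>x. \<alpha> + \<beta> * x + \<gamma> * (x\<^sup>2 - 1)\<^sup>2)"
    unfolding expand using ints by simp
  show "(\<integral>x. \<alpha> + \<beta> * x + \<gamma> * (x\<^sup>2 - 1)\<^sup>2 \<partial>M) = \<alpha> + \<gamma> * (moment M 4 - 1)"
    unfolding expand using ints moment_1 moment_2 \<open>prob UNIV = 1\<close>
    by (simp add: moment_def right_diff_distrib)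
qed

lemma one_le_moment_4: "1 \<le> moment M 4"
proof -
  have "0 \<le> (\<integral>x. (x\<^sup>2 - 1)\<^sup>2 \<partial>M)"
    by simp
  moreover have "(\<integral>x. (x\<^sup>2 - 1)\<^sup>2 \<partial>M) = moment M 4 - 1"
    using integral_quartic[of 0 0 1] by simp
  ultimately show ?thesis
    by linarith
qed

lemma integrable_indicator_atMost: "integrable M (indicator {..t} :: real \<Rightarrow> real)"
  by (intro integrable_real_indicator) (auto simp: less_top[symmetric])

lemma cdf_le_quartic:
  assumes "\<And>x. indicator {..t} x \<le> \<alpha> + \<beta> * x + \<gamma> * (x\<^sup>2 - 1)\<^sup>2"
  shows "cdf_of M t \<le> \<alpha> + \<gamma> * (moment M 4 - 1)"
proof -
  have "cdf_of M t = (\<integral>x. indicator {..t} x \<partial>M)"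
    by (simp add: cdf_of_def)
  also have "\<dots> \<le> (\<integral>x. \<alpha> + \<beta> * x + \<gamma> * (x\<^sup>2 - 1)\<^sup>2 \<partial>M)"
    using assms by (intro integral_mono integrable_quartic integrable_indicator_atMost)
  finally show ?thesis
    by (simp only: integral_quartic)
qed

lemma quartic_le_cdf:
  assumes "\<And>x. \<alpha> + \<beta> * x - \<gamma> * (x\<^sup>2 - 1)\<^sup>2 \<le> indicator {..t} x"
  shows "\<alpha> - \<gamma> * (moment M 4 - 1) \<le> cdf_of M t"
proof -
  have "\<alpha> - \<gamma> * (moment M 4 - 1) = (\<integral>x. \<alpha> + \<beta> * x + (-\<gamma>) * (x\<^sup>2 - 1)\<^sup>2 \<partial>M)"
    using integral_quartic[of \<alpha> \<beta> "-\<gamma>"] by simp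
  also have "\<dots> \<le> (\<integral>x. indicator {..t} x \<partial>M)"
    using assms by (intro integral_mono integrable_quartic integrable_indicator_atMost) simp
  also have "\<dots> = cdf_of M t"
    by (simp add: cdf_of_def)
  finally show ?thesis .
qed

lemma levy_within_bern_sym:
  assumes e: "0 < e" "e \<le> 1"
    and weight: "(1 / (4 * e) + 1 / e\<^sup>2) * (moment M 4 - 1) \<le> 3 / 4 * e"
  shows "levy_within M bern_sym e"
proof -
  define K where "K = 1 / (4 * e) + 1 / e\<^sup>2"
  define \<delta> where "\<delta> = moment M 4 - 1"
  have below_minus_one: "cdf_of M (-1-e) \<le> K * \<delta>"
    using cdf_le_quartic[of "-1-e" 0 0 K] indicator_le_minus_one_minus[OF e(1)]
    unfolding K_def \<delta>_def by simp
  have above_one: "1 - K * \<delta> \<le> cdf_of M (1+e)"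
    using quartic_le_cdf[of 1 0 K "1+e"] indicator_one_plus_ge[OF e(1)]
    unfolding K_def \<delta>_def by simp
  have below_one: "cdf_of M (1-e) \<le> (1/2 + e/4) + K * \<delta>"
    unfolding \<delta>_def
  proof (rule cdf_le_quartic[where \<beta> = "-1/2"])
    show "indicator {..1-e} x \<le> (1/2 + e/4) + -1/2 * x + K * (x\<^sup>2 - 1)\<^sup>2" for x
      using indicator_le_one_minus[OF e, of x] unfolding K_def by argo
  qed
  have above_minus_one: "(1/2 - e/4) - K * \<delta> \<le> cdf_of M (-1+e)"
    unfolding \<delta>_def
  proof (rule quartic_le_cdf[where \<beta> = "-1/2"])
    show "(1/2 - e/4) + -1/2 * x - K * (x\<^sup>2 - 1)\<^sup>2 \<le> indicator {..-1+e} x" for x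
      using indicator_minus_one_plus_ge[OF e, of x] unfolding K_def by argo
  qed
  have mono: "cdf_of M a \<le> cdf_of M b" if "a \<le> b" for a b
    using cdf_nondecreasing[OF that] by (simp add: cdf_of_eq_cdf)
  have bounded: "0 \<le> cdf_of M a" "cdf_of M a \<le> 1" for a
    using cdf_nonneg cdf_bounded_prob by (simp_all add: cdf_of_eq_cdf)
  have "K * \<delta> \<le> 3 / 4 * e"
    using weight unfolding K_def \<delta>_def .
  show ?thesis
    unfolding levy_within_def
  proof
    fix x :: real
    consider "x < -1" | "-1 \<le> x" "x < 1" | "1 \<le> x"
      by linarith
    then show "cdf_of M (x - e) - e \<le> cdf_of bern_sym x \<and> cdf_of bern_sym x \<le> cdf_of M (x + e) + e"
    proof cases
      case 1
      then have "cdf_of bern_sym x = 0"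
        by (simp add: cdf_bern_sym)
      moreover have "cdf_of M (x - e) \<le> cdf_of M (-1-e)"
        using 1 by (intro mono) simp
      ultimately show ?thesis
        using below_minus_one bounded[of "x + e"] \<open>K * \<delta> \<le> 3 / 4 * e\<close> e by linarith
    next
      case 2
      then have "cdf_of bern_sym x = 1/2"
        by (simp add: cdf_bern_sym)
      moreover have "cdf_of M (x - e) \<le> cdf_of M (1-e)" "cdf_of M (-1+e) \<le> cdf_of M (x + e)"
        using 2 by (intro mono; simp)+
      ultimately show ?thesis
        using below_one above_minus_one \<open>K * \<delta> \<le> 3 / 4 * e\<close> by linarith
    next
      case 3
      then have "cdf_of bern_sym x = 1"
        by (simp add: cdf_bern_sym)
      moreover have "cdf_of M (1+e) \<le> cdf_of M (x + e)"
        using 3 by (intro mono) simp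
      ultimately show ?thesis
        using above_one bounded[of "x - e"] \<open>K * \<delta> \<le> 3 / 4 * e\<close> e by linarith
    qed
  qed
qed

end

theorem mainTheorem4:
  fixes M :: "real measure"
  assumes "prob_space M"
    and "sets M = sets borel"
    and "integrable M (\<lambda>x. x ^ 4)"
    and "moment M 1 = 0"
    and "moment M 2 = 1"
  shows "levy_dist M bern_sym \<le> 7 / 2 * root 3 (moment M 4 - 1)"
proof -
  interpret standardized_distribution M
    using assms by (simp add: standardized_distribution_def standardized_distribution_axioms_def
        real_distribution_def real_distribution_axioms_def)
  have \<delta>: "0 \<le> moment M 4 - 1"
    using one_le_moment_4 by simp
  have bern: "prob_space bern_sym"
    by (simp add: bern_sym_def prob_space_measure_pmf)
  show ?thesis
  proof (rule levy_dist_le)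
    show c: "0 \<le> 7 / 2 * root 3 (moment M 4 - 1)"
      using \<delta> by (simp add: real_root_ge_zero)
    fix e
    assume ce: "7 / 2 * root 3 (moment M 4 - 1) < e"
    with c have "0 < e"
      by linarith
    show "levy_within M bern_sym e"
    proof (cases "1 \<le> e")
      case True
      then show ?thesis
        using levy_within_of_ge_1[OF prob_space_axioms bern] by blast
    next
      case False
      then show ?thesis
        using levy_weight_bound[OF \<open>0 < e\<close> _ \<delta> ce]
        by (intro levy_within_bern_sym \<open>0 < e\<close>) simp_all
    qed
  qed
qed

end
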